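(* Let $K\in\mathcal{K}^d$. (i) Suppose $(a^k,b^k)\to(a,b)$ in $\mathbb{R}^d\times\mathbb{R}$ as $k\to\infty$, with $a\ne0$ and $a^k\ne0$ for all $k$, and $K\cap H^+_{(a,b)}\in\mathcal{K}^d$ and $K\cap H^+_{(a^k,b^k)}\in\mathcal{K}^d$ for all $k\ge1$. Then $K\cap H^+_{(a^k,b^k)}\to K\cap H^+_{(a,b)}$ in the symmetric difference metric $d_S$ as $k\to\infty$. (ii) Suppose $(x^k,w^k)\to(x,w)$ in $F(\mathbb{R}^d,n)\times W_n$, let $1\le i\le n$, and suppose $K\cap C_i(x,w)\in\mathcal{K}^d$ and $K\cap C_i(x^k,w^k)\in\mathcal{K}^d$ for all $k\ge1$. Then $K\cap C_i(x^k,w^k)\to K\cap C_i(x,w)$ in $d_S$ as $k\to\infty$.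
   Context: $\mathcal{K}^d$ is the set of compact convex subsets of $\mathbb{R}^d$ with nonempty interior; $d_S(X,Y)=\mathcal{L}^d(X\triangle Y)$ (Lebesgue measure of the symmetric difference), which induces the same topology on $\mathcal{K}^d$ as the Hausdorff metric. For $(a,b)\in\mathbb{R}^d\times\mathbb{R}$ with $a\ne0$, $H^+_{(a,b)}=\{p\in\mathbb{R}^d:\langle a,p\rangle+b\ge0\}$. $F(\mathbb{R}^d,n)$ is the space of $n$-tuples of pairwise distinct points, $W_n=\{w\in\mathbb{R}^n:\sum w_i=0\}$, and $C_i(x,w)=\{p\in\mathbb{R}^d:\|p-x_i\|^2-w_i\le\|p-x_j\|^2-w_j\text{ for all }1\le j\le n\}$. *)

theory Defs
  imports "HOL-Analysis.Analysis"
begin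

definition convex_body :: "'a::euclidean_space set \<Rightarrow> bool" where
  "convex_body K \<longleftrightarrow> compact K \<and> convex K \<and> interior K \<noteq> {}"

definition dS :: "'a::euclidean_space set \<Rightarrow> 'a set \<Rightarrow> real" where
  "dS X Y = measure lebesgue ((X - Y) \<union> (Y - X))"

definition halfspace_plus :: "'a::euclidean_space \<Rightarrow> real \<Rightarrow> 'a set" where
  "halfspace_plus a b = {p. inner a p + b \<ge> 0}"

definition power_cell :: "nat \<Rightarrow> (nat \<Rightarrow> 'a::euclidean_space) \<Rightarrow> (nat \<Rightarrow> real) \<Rightarrow> nat \<Rightarrow> 'a set" where
  "power_cell n x w i =
     {p. \<forall>j\<in>{1..n}. (norm (p - x i))\<^sup>2 - w i \<le> (norm (p - x j))\<^sup>2 - w j}"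

definition distinct_config :: "nat \<Rightarrow> (nat \<Rightarrow> 'a) \<Rightarrow> bool" where
  "distinct_config n x \<longleftrightarrow> (\<forall>j\<in>{1..n}. \<forall>l\<in>{1..n}. j \<noteq> l \<longrightarrow> x j \<noteq> x l)"

definition zero_sum_weights :: "nat \<Rightarrow> (nat \<Rightarrow> real) \<Rightarrow> bool" where
  "zero_sum_weights n w \<longleftrightarrow> (\<Sum>j=1..n. w j) = 0"

end

theory Submission
  imports Defs
begin

text \<open>
  Membership of a point \<open>p\<close> in the approximating sets stabilises as soon as \<open>p\<close> avoids the
  limiting boundary hyperplanes: a half-space \<open>\<langle>a,p\<rangle> + b \<ge> 0\<close> depends continuously on
  \<open>(a, b)\<close>, so a strict sign of \<open>\<langle>a,p\<rangle> + b\<close> persists along the sequence. Power cells are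
  finite intersections of such half-spaces, and the boundary hyperplanes are negligible
  because the sites are distinct. Dominated convergence with the integrable majorant
  \<open>indicator K\<close> then turns this almost-everywhere pointwise convergence of the indicators of
  the symmetric differences into convergence of their measures. Only the finite measure of
  \<open>K\<close> enters.
\<close>

lemma tendsto_dS_Int_if_eventually_mem:
  fixes K :: "'a::euclidean_space set"
  assumes K: "K \<in> lmeasurable" and S: "\<And>k. S k \<in> sets lebesgue" and T: "T \<in> sets lebesgue"
    and N: "negligible N"
    and eventually_mem:
      "\<And>p. p \<in> K \<Longrightarrow> p \<notin> N \<Longrightarrow> eventually (\<lambda>k. p \<in> S k \<longleftrightarrow> p \<in> T) sequentially"
  shows "(\<lambda>k. dS (K \<inter> S k) (K \<inter> T)) \<longlonglongrightarrow> 0"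
proof -
  define D where "D k = (K \<inter> S k - K \<inter> T) \<union> (K \<inter> T - K \<inter> S k)" for k
  have D_measurable: "D k \<in> sets lebesgue" for k
    unfolding D_def using K S T by (auto simp: fmeasurable_def)
  have indicator_D_eventually_0: "eventually (\<lambda>k. indicator (D k) p = (0::real)) sequentially"
    if "p \<notin> N" for p
  proof (cases "p \<in> K")
    case True
    from eventually_mem[OF True that] show ?thesis
      by (rule eventually_mono) (auto simp: D_def)
  qed (simp add: D_def)
  have "(\<lambda>k. integral\<^sup>L lebesgue (indicator (D k) :: 'a \<Rightarrow> real))
          \<longlonglongrightarrow> integral\<^sup>L lebesgue (\<lambda>_::'a. 0)"
  proof (rule integral_dominated_convergence[where w = "indicator K"])
    show "integrable lebesgue (indicator K :: 'a \<Rightarrow> real)"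
      using K by (auto simp: fmeasurable_def intro: integrable_real_indicator)
    show "indicator (D k) \<in> borel_measurable lebesgue" for k
      using D_measurable by (rule borel_measurable_indicator)
    show "AE p in lebesgue. norm (indicator (D k) p :: real) \<le> indicator K p" for k
      by (rule AE_I2) (auto simp: D_def indicator_def)
    have "AE p in lebesgue. p \<notin> N"
      using N by (simp add: AE_not_in negligible_iff_null_sets)
    then show "AE p in lebesgue. (\<lambda>k. indicator (D k) p :: real) \<longlonglongrightarrow> 0"
      by (rule eventually_mono) (simp add: tendsto_eventually indicator_D_eventually_0)
  qed simp
  moreover have "integral\<^sup>L lebesgue (indicator (D k) :: 'a \<Rightarrow> real) = dS (K \<inter> S k) (K \<inter> T)"
    for k
    by (simp add: dS_def D_def)
  ultimately show ?thesis by simp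
qed

lemma eventually_nonneg_iff_tendsto_nonzero:
  fixes f :: "'b \<Rightarrow> real"
  assumes f: "(f \<longlongrightarrow> l) F" and l: "l \<noteq> 0"
  shows "eventually (\<lambda>k. 0 \<le> f k \<longleftrightarrow> 0 \<le> l) F"
proof (cases "0 < l")
  case True
  from order_tendstoD(1)[OF f True] show ?thesis
    by (rule eventually_mono) (use True in auto)
next
  case False
  with l have "l < 0" by simp
  from order_tendstoD(2)[OF f this] show ?thesis
    by (rule eventually_mono) (use \<open>l < 0\<close> in auto)
qed

lemma closed_halfspace_plus: "closed (halfspace_plus a b)"
  unfolding halfspace_plus_def
  by (rule closed_Collect_le[of "\<lambda>_. 0" "\<lambda>p. inner a p + b", simplified]) (intro continuous_intros)

lemma tendsto_dS_Int_INT_halfspace_plus: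
  fixes K :: "'a::euclidean_space set"
  assumes K: "K \<in> lmeasurable" and J: "finite J"
    and ak: "\<And>j. j \<in> J \<Longrightarrow> (\<lambda>k. ak k j) \<longlonglongrightarrow> a j"
    and bk: "\<And>j. j \<in> J \<Longrightarrow> (\<lambda>k. bk k j) \<longlonglongrightarrow> b j"
    and a: "\<And>j. j \<in> J \<Longrightarrow> a j \<noteq> 0"
  shows "(\<lambda>k. dS (K \<inter> (\<Inter>j\<in>J. halfspace_plus (ak k j) (bk k j)))
                 (K \<inter> (\<Inter>j\<in>J. halfspace_plus (a j) (b j)))) \<longlonglongrightarrow> 0"
proof -
  define Hk where "Hk k j = halfspace_plus (ak k j) (bk k j)" for k j
  define H where "H j = halfspace_plus (a j) (b j)" for j
  have "(\<lambda>k. dS (K \<inter> (\<Inter>j\<in>J. Hk k j)) (K \<inter> (\<Inter>j\<in>J. H j))) \<longlonglongrightarrow> 0"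
  proof (rule tendsto_dS_Int_if_eventually_mem[OF K])
    show "(\<Inter>j\<in>J. Hk k j) \<in> sets lebesgue" "(\<Inter>j\<in>J. H j) \<in> sets lebesgue" for k
      by (simp_all add: Hk_def H_def borel_closed closed_INT closed_halfspace_plus)
    show "negligible (\<Union>j\<in>J. {p. inner (a j) p = - b j})"
      using J a by (intro negligible_Union) (auto intro: negligible_hyperplane)
    fix p assume "p \<notin> (\<Union>j\<in>J. {p. inner (a j) p = - b j})"
    then have "\<forall>j\<in>J. eventually (\<lambda>k. p \<in> Hk k j \<longleftrightarrow> p \<in> H j) sequentially"
      unfolding Hk_def H_def halfspace_plus_def
      by (force intro: eventually_nonneg_iff_tendsto_nonzero tendsto_intros ak bk)
    then have "eventually (\<lambda>k. \<forall>j\<in>J. p \<in> Hk k j \<longleftrightarrow> p \<in> H j) sequentially"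
      using J by (simp add: eventually_ball_finite)
    then show "eventually (\<lambda>k. p \<in> (\<Inter>j\<in>J. Hk k j) \<longleftrightarrow> p \<in> (\<Inter>j\<in>J. H j)) sequentially"
      by (rule eventually_mono) blast
  qed
  then show ?thesis
    by (simp add: Hk_def H_def)
qed

lemma power_cell_eq_INT_halfspace_plus:
  "power_cell n y v i =
     (\<Inter>j\<in>{1..n} - {i}. halfspace_plus (2 *\<^sub>R (y i - y j)) ((norm (y j))\<^sup>2 - (norm (y i))\<^sup>2 + v i - v j))"
proof -
  have "(norm (p - y i))\<^sup>2 - v i \<le> (norm (p - y j))\<^sup>2 - v j \<longleftrightarrow>
          0 \<le> inner (2 *\<^sub>R (y i - y j)) p + ((norm (y j))\<^sup>2 - (norm (y i))\<^sup>2 + v i - v j)" for p j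
    by (simp add: power2_norm_eq_inner inner_diff_left inner_diff_right inner_commute algebra_simps)
  then show ?thesis
    unfolding power_cell_def halfspace_plus_def by auto
qed

theorem lemma6p7:
  fixes K :: "'a::euclidean_space set"
  assumes K: "convex_body K"
  shows
   "(\<forall>(ak :: nat \<Rightarrow> 'a) (bk :: nat \<Rightarrow> real) (a :: 'a) (b :: real).
       ((\<lambda>k. (ak k, bk k)) \<longlonglongrightarrow> (a, b)) \<and> a \<noteq> 0 \<and> (\<forall>k. ak k \<noteq> 0) \<and>
       convex_body (K \<inter> halfspace_plus a b) \<and>
       (\<forall>k. convex_body (K \<inter> halfspace_plus (ak k) (bk k)))
       \<longrightarrow> ((\<lambda>k. dS (K \<inter> halfspace_plus (ak k) (bk k)) (K \<inter> halfspace_plus a b)) \<longlonglongrightarrow> 0))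
    \<and>
    (\<forall>(n :: nat) (xk :: nat \<Rightarrow> nat \<Rightarrow> 'a) (wk :: nat \<Rightarrow> nat \<Rightarrow> real)
        (x :: nat \<Rightarrow> 'a) (w :: nat \<Rightarrow> real) (i :: nat).
       distinct_config n x \<and> zero_sum_weights n w \<and>
       (\<forall>k. distinct_config n (xk k) \<and> zero_sum_weights n (wk k)) \<and>
       (\<forall>j\<in>{1..n}. ((\<lambda>k. xk k j) \<longlonglongrightarrow> x j) \<and> ((\<lambda>k. wk k j) \<longlonglongrightarrow> w j)) \<and>
       1 \<le> i \<and> i \<le> n \<and>
       convex_body (K \<inter> power_cell n x w i) \<and>
       (\<forall>k. convex_body (K \<inter> power_cell n (xk k) (wk k) i))
       \<longrightarrow> ((\<lambda>k. dS (K \<inter> power_cell n (xk k) (wk k) i) (K \<inter> power_cell n x w i)) \<longlonglongrightarrow> 0))"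
proof -
  have K_lmeasurable: "K \<in> lmeasurable"
    using \<open>convex_body K\<close> by (simp add: convex_body_def lmeasurable_compact)
  show ?thesis
  proof (intro conjI allI impI; elim conjE)
    fix ak :: "nat \<Rightarrow> 'a" and bk :: "nat \<Rightarrow> real" and a b
    assume lim: "(\<lambda>k. (ak k, bk k)) \<longlonglongrightarrow> (a, b)" and "a \<noteq> 0"
    have "ak \<longlonglongrightarrow> a" "bk \<longlonglongrightarrow> b"
      using tendsto_fst[OF lim] tendsto_snd[OF lim] by simp_all
    with \<open>a \<noteq> 0\<close> show "(\<lambda>k. dS (K \<inter> halfspace_plus (ak k) (bk k)) (K \<inter> halfspace_plus a b)) \<longlonglongrightarrow> 0"
      using tendsto_dS_Int_INT_halfspace_plus[OF K_lmeasurable, of "{()}" "\<lambda>k _. ak k" "\<lambda>_. a" "\<lambda>k _. bk k" "\<lambda>_. b"]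
      by simp
  next
    fix n and xk :: "nat \<Rightarrow> nat \<Rightarrow> 'a" and wk :: "nat \<Rightarrow> nat \<Rightarrow> real" and x w i
    assume x: "distinct_config n x" and i: "1 \<le> i" "i \<le> n"
      and lim: "\<forall>j\<in>{1..n}. ((\<lambda>k. xk k j) \<longlonglongrightarrow> x j) \<and> ((\<lambda>k. wk k j) \<longlonglongrightarrow> w j)"
    have "x i - x j \<noteq> 0" if "j \<in> {1..n} - {i}" for j
      using x i that by (auto simp: distinct_config_def)
    with i lim show "(\<lambda>k. dS (K \<inter> power_cell n (xk k) (wk k) i) (K \<inter> power_cell n x w i)) \<longlonglongrightarrow> 0"
      unfolding power_cell_eq_INT_halfspace_plus
      by (intro tendsto_dS_Int_INT_halfspace_plus[OF K_lmeasurable]) (auto intro!: tendsto_intros)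
  qed
qed

end
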